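(* For $\tau\in\mathcal{L}$, the space $(\mathbb{R},\tau)$ is of first category if and only if every nonempty $\tau$-open set is an unbounded subset of $\mathbb{R}$.
   Context: $\eta$ denotes the Euclidean topology on $\mathbb{R}$. $\mathcal{L}$ denotes the family of all Hausdorff topologies $\tau$ on $\mathbb{R}$ with $\tau\subset\eta$. *)

theory Defs
  imports "HOL-Analysis.Analysis"
begin

definition nowhere_dense_in :: "'a topology \<Rightarrow> 'a set \<Rightarrow> bool" where
  "nowhere_dense_in X S \<longleftrightarrow> S \<subseteq> topspace X \<and> X interior_of (X closure_of S) = {}"

definition first_category_space :: "'a topology \<Rightarrow> bool" where
  "first_category_space X \<longleftrightarrow>
     (\<exists>\<F>. countable \<F> \<and> (\<forall>S\<in>\<F>. nowhere_dense_in X S) \<and> \<Union>\<F> = topspace X)"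

text \<open>The family L: Hausdorff topologies on the reals coarser than the Euclidean one.\<close>
definition coarser_Hausdorff_real :: "real topology \<Rightarrow> bool" where
  "coarser_Hausdorff_real \<tau> \<longleftrightarrow>
     topspace \<tau> = UNIV \<and> Hausdorff_space \<tau> \<and> (\<forall>S. openin \<tau> S \<longrightarrow> open S)"

end

theory Submission
  imports Defs
begin

text \<open>
  A Hausdorff topology \<tau> coarser than the Euclidean one makes every compact set \<tau>-closed.
  Consequently, inside a bounded \<tau>-open set U the two topologies agree: a Euclidean open
  W \<subseteq> U is \<tau>-open, being U minus the compact set closure U - W.

  If every nonempty \<tau>-open set is unbounded, the compact intervals [-n, n] are \<tau>-closed
  with empty \<tau>-interior, so \<real> is a countable union of \<tau>-nowhere dense sets.
  Conversely, if U is a nonempty bounded \<tau>-open set and \<real> is a countable union of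
  \<tau>-nowhere dense sets S, then the traces S \<inter> U are nowhere dense in the Euclidean sense,
  so the nonempty open set U would be meagre, contradicting Baire's theorem.
\<close>

lemma topspace_eq_UNIV_if_continuous_map_id:
  assumes "continuous_map euclidean X id"
  shows "topspace X = UNIV"
  using continuous_map_image_subset_topspace[OF assms] by auto

lemma open_if_openin_continuous_map_id:
  assumes "continuous_map euclidean X id" "openin X U"
  shows "open U"
  using openin_continuous_map_preimage[OF assms] by simp

lemma coarser_Hausdorff_real_iff:
  "coarser_Hausdorff_real \<tau> \<longleftrightarrow> Hausdorff_space \<tau> \<and> continuous_map euclidean \<tau> id"
  by (auto simp: coarser_Hausdorff_real_def continuous_map_def)

lemma closure_subset_closure_of_if_continuous_map_id:
  assumes "continuous_map euclidean X id"
  shows "closure S \<subseteq> X closure_of S"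
  using continuous_map_image_closure_subset[OF assms, of S] by simp

lemma closedin_if_compact_continuous_map_id:
  assumes "Hausdorff_space X" "continuous_map euclidean X id" "compact C"
  shows "closedin X C"
proof -
  have "compactin X (id ` C)"
    using image_compactin[of euclidean C X id] assms(2,3) by simp
  then show ?thesis
    using compactin_imp_closedin[OF assms(1)] by simp
qed

lemma openin_if_open_subset_bounded_openin:
  fixes X :: "'a::heine_borel topology"
  assumes "Hausdorff_space X" "continuous_map euclidean X id"
    and "openin X U" "bounded U" "open W" "W \<subseteq> U"
  shows "openin X W"
proof -
  have "compact (closure U - W)"
    using assms(4,5) by (simp add: compact_closure Diff_eq compact_Int_closed closed_Compl)
  then have "closedin X (closure U - W)"
    using closedin_if_compact_continuous_map_id assms(1,2) by blast
  then have "openin X (U - (closure U - W))"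
    by (rule openin_diff[OF assms(3)])
  moreover have "U - (closure U - W) = W"
    using assms(6) closure_subset by blast
  ultimately show ?thesis by simp
qed

lemma interior_closure_Int_bounded_openin_eq_empty:
  fixes X :: "'a::heine_borel topology"
  assumes "Hausdorff_space X" "continuous_map euclidean X id"
    and "openin X U" "bounded U" "nowhere_dense_in X S"
  shows "interior (closure (S \<inter> U)) = {}"
proof -
  define W where "W = interior (closure (S \<inter> U)) \<inter> U"
  have "open U"
    using assms(2,3) by (rule open_if_openin_continuous_map_id)
  then have "openin X W"
    unfolding W_def by (intro openin_if_open_subset_bounded_openin[OF assms(1-4)]) auto
  moreover have "W \<subseteq> X closure_of S"
  proof -
    have "W \<subseteq> closure S"
      unfolding W_def by (meson closure_mono inf_le1 interior_subset le_infI1 order_trans)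
    then show ?thesis
      using closure_subset_closure_of_if_continuous_map_id[OF assms(2)] by blast
  qed
  ultimately have "W \<subseteq> X interior_of (X closure_of S)"
    by (simp add: interior_of_maximal)
  then have "interior (closure (S \<inter> U)) \<inter> U = {}"
    using assms(5) unfolding nowhere_dense_in_def W_def by blast
  then have "interior (closure (S \<inter> U)) \<inter> closure U = {}"
    by (simp add: open_Int_closure_eq_empty)
  moreover have "interior (closure (S \<inter> U)) \<subseteq> closure U"
    by (meson closure_mono inf_le2 interior_subset order_trans)
  ultimately show ?thesis by blast
qed

lemma not_bounded_openin_if_first_category:
  fixes X :: "'a::heine_borel topology"
  assumes "Hausdorff_space X" "continuous_map euclidean X id"
    and "first_category_space X" "openin X U" "U \<noteq> {}"
  shows "\<not> bounded U"
proof
  assume "bounded U"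
  obtain \<F> where \<F>: "countable \<F>" "\<forall>S\<in>\<F>. nowhere_dense_in X S" "\<Union>\<F> = topspace X"
    using assms(3) unfolding first_category_space_def by (elim exE conjE)
  define \<G> where "\<G> = (\<lambda>S. closure (S \<inter> U)) ` \<F>"
  have "countable \<G>"
    unfolding \<G>_def using \<F>(1) by simp
  have \<G>_nowhere_dense: "closedin euclidean T \<and> euclidean interior_of T = {}" if T: "T \<in> \<G>" for T
  proof -
    obtain S where "S \<in> \<F>" "T = closure (S \<inter> U)"
      using T unfolding \<G>_def by blast
    then show ?thesis
      using \<F>(2) interior_closure_Int_bounded_openin_eq_empty[OF assms(1,2,4) \<open>bounded U\<close>] by simp
  qed
  have "euclidean interior_of \<Union>\<G> = {}"
    by (rule Baire_category_alt[OF _ \<open>countable \<G>\<close> \<G>_nowhere_dense])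
      (simp add: locally_compact_space_euclidean regular_space_euclidean)
  moreover have "U \<subseteq> interior (\<Union>\<G>)"
  proof (rule interior_maximal)
    show "U \<subseteq> \<Union>\<G>"
    proof
      fix x assume "x \<in> U"
      then have "x \<in> \<Union>\<F>"
        unfolding \<F>(3) using openin_subset[OF assms(4)] by blast
      then obtain S where "S \<in> \<F>" "x \<in> S"
        by blast
      then have "x \<in> closure (S \<inter> U)"
        using \<open>x \<in> U\<close> closure_subset[of "S \<inter> U"] by blast
      then show "x \<in> \<Union>\<G>"
        unfolding \<G>_def by (rule UN_I[OF \<open>S \<in> \<F>\<close>])
    qed
    show "open U"
      using assms(2,4) by (rule open_if_openin_continuous_map_id)
  qed
  ultimately show False
    using assms(5) by simp
qed

lemma first_category_if_openin_not_bounded: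
  fixes X :: "'a::{heine_borel,real_normed_vector} topology"
  assumes "Hausdorff_space X" "continuous_map euclidean X id"
    and "\<forall>U. openin X U \<and> U \<noteq> {} \<longrightarrow> \<not> bounded U"
  shows "first_category_space X"
proof -
  define \<F> where "\<F> = range (\<lambda>n::nat. cball (0::'a) (real n))"
  have "nowhere_dense_in X C" if "C \<in> \<F>" for C
  proof -
    obtain n :: nat where C: "C = cball 0 (real n)"
      using \<open>C \<in> \<F>\<close> unfolding \<F>_def by blast
    then have "closedin X C"
      using closedin_if_compact_continuous_map_id[OF assms(1,2)] by simp
    then have "X closure_of C = C"
      by (rule closure_of_closedin)
    moreover have "X interior_of C = {}"
    proof -
      have "bounded (X interior_of C)"
        unfolding C by (rule bounded_subset[OF bounded_cball interior_of_subset])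
      then show ?thesis
        by (metis assms(3) openin_interior_of)
    qed
    ultimately show ?thesis
      unfolding nowhere_dense_in_def topspace_eq_UNIV_if_continuous_map_id[OF assms(2)] by simp
  qed
  moreover have "\<Union>\<F> = topspace X"
  proof -
    have "x \<in> \<Union>\<F>" for x :: 'a
    proof -
      obtain n :: nat where "norm x \<le> real n"
        using real_arch_simple by blast
      then have "x \<in> cball 0 (real n)"
        by simp
      then show ?thesis
        unfolding \<F>_def by blast
    qed
    then show ?thesis
      using topspace_eq_UNIV_if_continuous_map_id[OF assms(2)] by blast
  qed
  moreover have "countable \<F>"
    unfolding \<F>_def by simp
  ultimately show ?thesis
    unfolding first_category_space_def by (intro exI[of _ \<F>]) simp
qed

theorem proposition2:
  fixes \<tau> :: "real topology"
  assumes "coarser_Hausdorff_real \<tau>"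
  shows "first_category_space \<tau> \<longleftrightarrow>
           (\<forall>U. openin \<tau> U \<and> U \<noteq> {} \<longrightarrow> \<not> bounded U)"
proof -
  have \<tau>: "Hausdorff_space \<tau>" "continuous_map euclidean \<tau> id"
    using assms by (simp_all add: coarser_Hausdorff_real_iff)
  show ?thesis
    using not_bounded_openin_if_first_category[OF \<tau>] first_category_if_openin_not_bounded[OF \<tau>]
    by blast
qed

end
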